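(* Let $S$ and $S'$ be two TBLS searches with strict partial orders $\prec_S$ and $\prec_{S'}$ on $P_f(\mathbb{N}^+)$. Then the following are equivalent: (i) for every finite graph $G$, every $S'$-ordering of $G$ is also an $S$-ordering of $G$; (ii) for all $A,B\in P_f(\mathbb{N}^+)$, $A\prec_S B$ implies $A\prec_{S'} B$.
   Context: Let $G=(V,E)$ be a finite undirected graph with $n$ vertices; $N(v)$ denotes the set of neighbours of $v$. An ordering of $V$ is a bijection $\sigma:\{1,\dots,n\}\to V$; $\sigma(i)$ is the $i$th vertex. $P_f(\mathbb{N}^+)$ is the set of finite subsets of the positive integers. Given a strict partial order $\prec$ on $P_f(\mathbb{N}^+)$ and an ordering $\tau$ of $V$, the Tie-Breaking Label Search $\mathrm{TBLS}(G,\prec,\tau)$ is the procedure: set $label(v)=\emptyset$ for every $v$; for $i=1,\dots,n$: let Eligible be the set of unnumbered vertices $x$ such that there is no unnumbered vertex $y$ with $label(x)\prec label(y)$; let $v$ be the first vertex of Eligible in the ordering $\tau$; set $\sigma(i)=v$ ($v$ becomes numbered); for every unnumbered neighbour $w$ of $v$ replace $label(w)$ by $label(w)\cup\{i\}$. The output is $\sigma$. A TBLS search $S$ is specified by a strict partial order $\prec_S$ on $P_f(\mathbb{N}^+)$; an ordering $\sigma$ of $V$ is an $S$-ordering of $G$ if $\sigma=\mathrm{TBLS}(G,\prec_S,\tau)$ for some ordering $\tau$ of $V$. *)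

theory Defs
  imports Main
begin

definition PF :: "nat set set" where
  "PF = {A. finite A \<and> 0 \<notin> A}"

definition strict_po_on_PF :: "(nat set \<Rightarrow> nat set \<Rightarrow> bool) \<Rightarrow> bool" where
  "strict_po_on_PF r \<longleftrightarrow>
     (\<forall>A B. r A B \<longrightarrow> A \<in> PF \<and> B \<in> PF) \<and>
     (\<forall>A\<in>PF. \<not> r A A) \<and>
     (\<forall>A\<in>PF. \<forall>B\<in>PF. \<forall>C\<in>PF. r A B \<longrightarrow> r B C \<longrightarrow> r A C)"

definition fin_graph :: "'v set \<Rightarrow> ('v \<Rightarrow> 'v \<Rightarrow> bool) \<Rightarrow> bool" where
  "fin_graph V E \<longleftrightarrow> finite V \<and>
     (\<forall>x y. E x y \<longrightarrow> x \<in> V \<and> y \<in> V \<and> x \<noteq> y \<and> E y x)"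

text \<open>An ordering of V is a list of its vertices without repetition; the i-th vertex
  (1-based) is the list element at index i-1.\<close>
definition is_ordering :: "'v set \<Rightarrow> 'v list \<Rightarrow> bool" where
  "is_ordering V \<sigma> \<longleftrightarrow> distinct \<sigma> \<and> set \<sigma> = V"

definition tbls_label :: "('v \<Rightarrow> 'v \<Rightarrow> bool) \<Rightarrow> 'v list \<Rightarrow> 'v \<Rightarrow> nat set" where
  "tbls_label E p w = {i. 1 \<le> i \<and> i \<le> length p \<and> E (p ! (i - 1)) w}"

definition tbls_eligible ::
  "'v set \<Rightarrow> ('v \<Rightarrow> 'v \<Rightarrow> bool) \<Rightarrow> (nat set \<Rightarrow> nat set \<Rightarrow> bool) \<Rightarrow> 'v list \<Rightarrow> 'v set" where
  "tbls_eligible V E prec p =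
     {x \<in> V - set p. \<not> (\<exists>y \<in> V - set p. prec (tbls_label E p x) (tbls_label E p y))}"

definition tbls_step ::
  "'v set \<Rightarrow> ('v \<Rightarrow> 'v \<Rightarrow> bool) \<Rightarrow> (nat set \<Rightarrow> nat set \<Rightarrow> bool) \<Rightarrow> 'v list \<Rightarrow> 'v list \<Rightarrow> 'v list" where
  "tbls_step V E prec \<tau> p = p @ [hd (filter (\<lambda>x. x \<in> tbls_eligible V E prec p) \<tau>)]"

definition TBLS ::
  "'v set \<Rightarrow> ('v \<Rightarrow> 'v \<Rightarrow> bool) \<Rightarrow> (nat set \<Rightarrow> nat set \<Rightarrow> bool) \<Rightarrow> 'v list \<Rightarrow> 'v list" where
  "TBLS V E prec \<tau> = (tbls_step V E prec \<tau> ^^ card V) []"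

definition is_search_ordering ::
  "'v set \<Rightarrow> ('v \<Rightarrow> 'v \<Rightarrow> bool) \<Rightarrow> (nat set \<Rightarrow> nat set \<Rightarrow> bool) \<Rightarrow> 'v list \<Rightarrow> bool" where
  "is_search_ordering V E prec \<sigma> \<longleftrightarrow> (\<exists>\<tau>. is_ordering V \<tau> \<and> \<sigma> = TBLS V E prec \<tau>)"

end

theory Submission
  imports Defs
begin

(* An ordering is an S-ordering exactly when every vertex is eligible at the moment it is
   numbered; using the ordering itself as tie-break then reproduces it. Eligibility is antitone
   in the order, which gives (ii) \<Longrightarrow> (i). Conversely, if A \<prec>S B but not A \<prec>S' B, pick m with
   A, B \<subseteq> {1..m} and build a graph on 0, ..., m+1 visited in natural order, in which vertex j < m
   gets a \<prec>S'-maximal label among the subsets of {1..j} and, at step m, the vertices m and m+1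
   carry the labels A and B. This visit order is an S'-ordering, but not an S-ordering, since at
   step m the vertex m+1 dominates m under \<prec>S. *)

lemma subset_atLeastAtMost_in_PF: "X \<subseteq> {1..k} \<Longrightarrow> X \<in> PF"
  unfolding PF_def by (auto intro: finite_subset)

lemma tbls_label_subset: "tbls_label E p w \<subseteq> {1..length p}"
  unfolding tbls_label_def by auto

lemma tbls_label_in_PF: "tbls_label E p w \<in> PF"
  by (rule subset_atLeastAtMost_in_PF[OF tbls_label_subset])

lemma strict_po_on_PF_irrefl: "strict_po_on_PF prec \<Longrightarrow> \<not> prec A A"
  unfolding strict_po_on_PF_def by blast

lemma strict_po_on_PF_has_maximal:
  assumes po: "strict_po_on_PF prec" and X: "finite X" "X \<noteq> {}" "X \<subseteq> PF"
  shows "\<exists>A\<in>X. \<forall>B\<in>X. \<not> prec A B"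
proof -
  let ?R = "{(B, A). A \<in> X \<and> B \<in> X \<and> prec A B}"
  have "finite ?R"
    by (rule finite_subset[of _ "X \<times> X"]) (use X(1) in auto)
  moreover have "acyclic ?R"
  proof -
    have "trans ?R" using po X(3) unfolding strict_po_on_PF_def trans_def by blast
    moreover have "irrefl ?R" using po X(3) unfolding strict_po_on_PF_def irrefl_def by blast
    ultimately show ?thesis by (simp add: acyclic_irrefl)
  qed
  ultimately have "wf ?R" by (rule finite_acyclic_wf)
  moreover obtain A0 where "A0 \<in> X" using X(2) by blast
  ultimately obtain A where "A \<in> X" "\<And>B. (B, A) \<in> ?R \<Longrightarrow> B \<notin> X"
    by (rule wfE_min) blast+
  then show ?thesis by blast
qed

lemma tbls_eligible_nonempty:
  assumes "strict_po_on_PF prec" "finite V" "V - set p \<noteq> {}"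
  shows "tbls_eligible V E prec p \<noteq> {}"
proof -
  let ?X = "tbls_label E p ` (V - set p)"
  have "?X \<subseteq> PF" by (auto simp: tbls_label_in_PF)
  then obtain A where "A \<in> ?X" "\<forall>B\<in>?X. \<not> prec A B"
    using strict_po_on_PF_has_maximal[OF assms(1)] assms(2,3)
    by (metis finite_Diff finite_imageI image_is_empty)
  then show ?thesis unfolding tbls_eligible_def by blast
qed

lemma tbls_step_appends_eligible:
  assumes "strict_po_on_PF prec" "finite V" "is_ordering V \<tau>" "V - set p \<noteq> {}"
  shows "\<exists>v \<in> tbls_eligible V E prec p. tbls_step V E prec \<tau> p = p @ [v]"
proof -
  let ?P = "\<lambda>x. x \<in> tbls_eligible V E prec p"
  have "tbls_eligible V E prec p \<subseteq> set \<tau>"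
    using assms(3) unfolding is_ordering_def tbls_eligible_def by blast
  then have "filter ?P \<tau> \<noteq> []"
    using tbls_eligible_nonempty[OF assms(1,2,4), of E] by (auto simp: filter_empty_conv)
  then have "?P (hd (filter ?P \<tau>))" using hd_in_set by fastforce
  then show ?thesis unfolding tbls_step_def by blast
qed

definition tbls_consistent ::
  "'v set \<Rightarrow> ('v \<Rightarrow> 'v \<Rightarrow> bool) \<Rightarrow> (nat set \<Rightarrow> nat set \<Rightarrow> bool) \<Rightarrow> 'v list \<Rightarrow> bool" where
  "tbls_consistent V E prec \<sigma> \<longleftrightarrow> (\<forall>j < length \<sigma>. \<sigma> ! j \<in> tbls_eligible V E prec (take j \<sigma>))"

lemma tbls_consistent_Nil [simp]: "tbls_consistent V E prec []"
  unfolding tbls_consistent_def by simp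

lemma tbls_consistent_snoc:
  "tbls_consistent V E prec (p @ [v]) \<longleftrightarrow>
     tbls_consistent V E prec p \<and> v \<in> tbls_eligible V E prec p"
  unfolding tbls_consistent_def by (auto simp: nth_append less_Suc_eq)

lemma tbls_consistent_distinct_subset:
  assumes "tbls_consistent V E prec \<sigma>"
  shows "distinct \<sigma>" "set \<sigma> \<subseteq> V"
proof -
  have el: "\<sigma> ! j \<in> V - set (take j \<sigma>)" if "j < length \<sigma>" for j
    using assms that unfolding tbls_consistent_def tbls_eligible_def by blast
  show "set \<sigma> \<subseteq> V" using el by (auto simp: in_set_conv_nth)
  have "\<sigma> ! i \<noteq> \<sigma> ! j" if "i < j" "j < length \<sigma>" for i j
  proof -
    have "\<sigma> ! i \<in> set (take j \<sigma>)"
      using that by (metis in_set_conv_nth length_take min.absorb4 nth_take)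
    then show ?thesis using el[OF that(2)] by auto
  qed
  then show "distinct \<sigma>"
    unfolding distinct_conv_nth by (metis linorder_neq_iff)
qed

lemma tbls_iterate_consistent:
  assumes po: "strict_po_on_PF prec" and V: "finite V" and \<tau>: "is_ordering V \<tau>"
  shows "k \<le> card V \<Longrightarrow> tbls_consistent V E prec ((tbls_step V E prec \<tau> ^^ k) [])
           \<and> length ((tbls_step V E prec \<tau> ^^ k) []) = k"
proof (induction k)
  case 0
  show ?case by simp
next
  case (Suc k)
  define p where "p = (tbls_step V E prec \<tau> ^^ k) []"
  have p: "tbls_consistent V E prec p" "length p = k"
    using Suc unfolding p_def by simp_all
  have "card (set p) = k"
    using p tbls_consistent_distinct_subset(1) distinct_card by blast
  then have "\<not> V \<subseteq> set p" using Suc.prems card_mono[of "set p" V] by auto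
  then obtain v where "v \<in> tbls_eligible V E prec p" "tbls_step V E prec \<tau> p = p @ [v]"
    using tbls_step_appends_eligible[OF po V \<tau>] by blast
  then show ?case using p unfolding p_def by (simp add: tbls_consistent_snoc)
qed

lemma TBLS_is_consistent_ordering:
  assumes po: "strict_po_on_PF prec" and V: "finite V" and \<tau>: "is_ordering V \<tau>"
  shows "is_ordering V (TBLS V E prec \<tau>) \<and> tbls_consistent V E prec (TBLS V E prec \<tau>)"
proof -
  let ?\<sigma> = "TBLS V E prec \<tau>"
  have \<sigma>: "tbls_consistent V E prec ?\<sigma>" "length ?\<sigma> = card V"
    using tbls_iterate_consistent[OF po V \<tau>, of "card V" E] unfolding TBLS_def by simp_all
  note dist = tbls_consistent_distinct_subset[OF \<sigma>(1)]
  have "set ?\<sigma> = V"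
    using card_subset_eq[OF V dist(2)] distinct_card[OF dist(1)] \<sigma>(2) by simp
  then show ?thesis using dist \<sigma>(1) unfolding is_ordering_def by blast
qed

lemma tbls_step_take_consistent:
  assumes "tbls_consistent V E prec \<sigma>" "k < length \<sigma>"
  shows "tbls_step V E prec \<sigma> (take k \<sigma>) = take (Suc k) \<sigma>"
proof -
  let ?P = "\<lambda>x. x \<in> tbls_eligible V E prec (take k \<sigma>)"
  have "filter ?P (take k \<sigma>) = []"
    unfolding tbls_eligible_def by (auto simp: filter_empty_conv)
  moreover have "?P (\<sigma> ! k)" using assms unfolding tbls_consistent_def by blast
  moreover have "filter ?P \<sigma> = filter ?P (take k \<sigma>) @ filter ?P (drop k \<sigma>)"
    by (metis append_take_drop_id filter_append)
  moreover have "drop k \<sigma> = \<sigma> ! k # drop (Suc k) \<sigma>"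
    using assms(2) by (simp add: Cons_nth_drop_Suc)
  ultimately have "filter ?P \<sigma> = \<sigma> ! k # filter ?P (drop (Suc k) \<sigma>)"
    by simp
  then show ?thesis
    unfolding tbls_step_def using assms(2) by (simp add: take_Suc_conv_app_nth)
qed

lemma TBLS_consistent_ordering:
  assumes "is_ordering V \<sigma>" "tbls_consistent V E prec \<sigma>"
  shows "TBLS V E prec \<sigma> = \<sigma>"
proof -
  have len: "length \<sigma> = card V"
    using assms(1) distinct_card unfolding is_ordering_def by fastforce
  have "(tbls_step V E prec \<sigma> ^^ k) [] = take k \<sigma>" if "k \<le> card V" for k
    using that
  proof (induction k)
    case (Suc k)
    then show ?case using tbls_step_take_consistent[OF assms(2)] len by simp
  qed simp
  then show ?thesis unfolding TBLS_def using len by simp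
qed

lemma is_search_ordering_iff:
  assumes "strict_po_on_PF prec" "finite V"
  shows "is_search_ordering V E prec \<sigma> \<longleftrightarrow> is_ordering V \<sigma> \<and> tbls_consistent V E prec \<sigma>"
proof
  assume "is_search_ordering V E prec \<sigma>"
  then show "is_ordering V \<sigma> \<and> tbls_consistent V E prec \<sigma>"
    unfolding is_search_ordering_def using TBLS_is_consistent_ordering[OF assms] by blast
next
  assume "is_ordering V \<sigma> \<and> tbls_consistent V E prec \<sigma>"
  then show "is_search_ordering V E prec \<sigma>"
    unfolding is_search_ordering_def using TBLS_consistent_ordering by metis
qed

lemma tbls_eligible_mono:
  assumes "\<forall>A\<in>PF. \<forall>B\<in>PF. prec A B \<longrightarrow> prec' A B"
  shows "tbls_eligible V E prec' p \<subseteq> tbls_eligible V E prec p"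
proof -
  have "prec (tbls_label E p x) (tbls_label E p y) \<Longrightarrow> prec' (tbls_label E p x) (tbls_label E p y)"
    for x y using assms tbls_label_in_PF[of E p x] tbls_label_in_PF[of E p y] by blast
  then show ?thesis unfolding tbls_eligible_def by blast
qed

lemma tbls_consistent_mono:
  assumes "\<forall>A\<in>PF. \<forall>B\<in>PF. prec A B \<longrightarrow> prec' A B" "tbls_consistent V E prec' \<sigma>"
  shows "tbls_consistent V E prec \<sigma>"
  unfolding tbls_consistent_def
proof (intro allI impI)
  fix j assume "j < length \<sigma>"
  then have "\<sigma> ! j \<in> tbls_eligible V E prec' (take j \<sigma>)"
    using assms(2) unfolding tbls_consistent_def by simp
  then show "\<sigma> ! j \<in> tbls_eligible V E prec (take j \<sigma>)"
    by (rule subsetD[OF tbls_eligible_mono[OF assms(1)]])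
qed

lemma is_search_ordering_mono:
  assumes "strict_po_on_PF prec" "strict_po_on_PF prec'" "finite V"
    and "\<forall>A\<in>PF. \<forall>B\<in>PF. prec A B \<longrightarrow> prec' A B" "is_search_ordering V E prec' \<sigma>"
  shows "is_search_ordering V E prec \<sigma>"
  using assms(5) tbls_consistent_mono[OF assms(4), of V E \<sigma>]
  by (simp add: is_search_ordering_iff[OF assms(1,3)] is_search_ordering_iff[OF assms(2,3)])

(* Visiting 0, 1, ... in order numbers vertex u by Suc u, so L v prescribes the label of v. *)
definition label_graph :: "nat \<Rightarrow> (nat \<Rightarrow> nat set) \<Rightarrow> nat \<Rightarrow> nat \<Rightarrow> bool" where
  "label_graph n L u v \<longleftrightarrow> u < n \<and> v < n \<and> (u < v \<and> Suc u \<in> L v \<or> v < u \<and> Suc v \<in> L u)"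

lemma fin_graph_label_graph: "fin_graph {0..<n} (label_graph n L)"
  unfolding fin_graph_def label_graph_def by auto

lemma tbls_label_label_graph:
  assumes "j \<le> w" "w < n"
  shows "tbls_label (label_graph n L) [0..<j] w = L w \<inter> {1..j}"
  using assms unfolding tbls_label_def label_graph_def by auto

lemma tbls_consistent_upt_iff:
  "tbls_consistent V E prec [0..<n] \<longleftrightarrow> (\<forall>j<n. j \<in> tbls_eligible V E prec [0..<j])"
  unfolding tbls_consistent_def by simp

lemma label_graph_eligible_iff:
  assumes "j < n"
  shows "j \<in> tbls_eligible {0..<n} (label_graph n L) prec [0..<j] \<longleftrightarrow>
      (\<forall>w\<in>{j..<n}. \<not> prec (L j \<inter> {1..j}) (L w \<inter> {1..j}))"
proof -
  have "{0..<n} - set [0..<j] = {j..<n}" by simp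
  moreover have "tbls_label (label_graph n L) [0..<j] w = L w \<inter> {1..j}" if "w \<in> {j..<n}" for w
    using that by (simp add: tbls_label_label_graph)
  ultimately show ?thesis
    using assms unfolding tbls_eligible_def by simp
qed

lemma tbls_consistent_label_graph_iff:
  "tbls_consistent {0..<n} (label_graph n L) prec [0..<n] \<longleftrightarrow>
     (\<forall>j<n. \<forall>w\<in>{j..<n}. \<not> prec (L j \<inter> {1..j}) (L w \<inter> {1..j}))"
  by (simp add: tbls_consistent_upt_iff label_graph_eligible_iff)

lemma label_graph_separates:
  assumes po': "strict_po_on_PF prec'" and AB: "A \<in> PF" "B \<in> PF" "\<not> prec' A B"
  obtains n L where "tbls_consistent {0..<n} (label_graph n L) prec' [0..<n]"
    and "\<And>prec. prec A B \<Longrightarrow> \<not> tbls_consistent {0..<n} (label_graph n L) prec [0..<n]"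
proof -
  obtain m where m: "A \<subseteq> {1..m}" "B \<subseteq> {1..m}"
  proof -
    have "finite (A \<union> B)" "0 \<notin> A \<union> B" using AB unfolding PF_def by auto
    then obtain m where "\<forall>x\<in>A \<union> B. x \<le> m" by (auto simp: finite_nat_set_iff_bounded_le)
    then show thesis
      using that \<open>0 \<notin> A \<union> B\<close> by (metis Un_iff atLeastAtMost_iff less_one not_less subsetI)
  qed
  have "\<exists>M. M \<subseteq> {1..j} \<and> (\<forall>N. N \<subseteq> {1..j} \<longrightarrow> \<not> prec' M N)" for j
  proof -
    have "Pow {1..j} \<subseteq> PF" using subset_atLeastAtMost_in_PF by blast
    then show ?thesis using strict_po_on_PF_has_maximal[OF po', of "Pow {1..j}"] by blast
  qed
  then obtain M where M: "\<And>j. M j \<subseteq> {1..j}" "\<And>j N. N \<subseteq> {1..j} \<Longrightarrow> \<not> prec' (M j) N"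
    by metis
  define L where "L v = (if v < m then M v else if v = m then A else B)" for v
  have LA: "L m \<inter> {1..m} = A" and LB: "L (Suc m) \<inter> {1..m} = B"
    using m by (auto simp: L_def)
  have "tbls_consistent {0..<m + 2} (label_graph (m + 2) L) prec' [0..<m + 2]"
    unfolding tbls_consistent_label_graph_iff
  proof (intro allI impI ballI)
    fix j w assume j: "j < m + 2" and w: "w \<in> {j..<m + 2}"
    consider "j < m" | "j = m" | "j = Suc m" using j by linarith
    then show "\<not> prec' (L j \<inter> {1..j}) (L w \<inter> {1..j})"
    proof cases
      case 1
      then have "L j \<inter> {1..j} = M j" using M(1) by (auto simp: L_def)
      then show ?thesis using M(2) by auto
    next
      case 2
      then have "w = m \<or> w = Suc m" using w by auto
      then show ?thesis using 2 LA LB AB(3) strict_po_on_PF_irrefl[OF po'] by auto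
    next
      case 3
      then have "w = j" using w by auto
      then show ?thesis using strict_po_on_PF_irrefl[OF po'] by simp
    qed
  qed
  moreover have "\<not> tbls_consistent {0..<m + 2} (label_graph (m + 2) L) prec [0..<m + 2]"
    if "prec A B" for prec
    unfolding tbls_consistent_label_graph_iff using that LA LB by fastforce
  ultimately show thesis using that by blast
qed

theorem theorem1:
  fixes precS precS' :: "nat set \<Rightarrow> nat set \<Rightarrow> bool"
  assumes "strict_po_on_PF precS" and "strict_po_on_PF precS'"
  shows "(\<forall>(V :: nat set) E \<sigma>. fin_graph V E \<longrightarrow>
            is_search_ordering V E precS' \<sigma> \<longrightarrow> is_search_ordering V E precS \<sigma>)
         \<longleftrightarrow> (\<forall>A\<in>PF. \<forall>B\<in>PF. precS A B \<longrightarrow> precS' A B)"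
proof
  assume orderings: "\<forall>(V :: nat set) E \<sigma>. fin_graph V E \<longrightarrow>
            is_search_ordering V E precS' \<sigma> \<longrightarrow> is_search_ordering V E precS \<sigma>"
  show "\<forall>A\<in>PF. \<forall>B\<in>PF. precS A B \<longrightarrow> precS' A B"
  proof (intro ballI impI; rule ccontr)
    fix A B assume AB: "A \<in> PF" "B \<in> PF" "precS A B" "\<not> precS' A B"
    obtain n L where "tbls_consistent {0..<n} (label_graph n L) precS' [0..<n]"
      and not_S: "\<not> tbls_consistent {0..<n} (label_graph n L) precS [0..<n]"
      using label_graph_separates[OF assms(2) AB(1,2,4)] AB(3) by metis
    then have "is_search_ordering {0..<n} (label_graph n L) precS' [0..<n]"
      by (simp add: is_search_ordering_iff[OF assms(2)] is_ordering_def)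
    then have "is_search_ordering {0..<n} (label_graph n L) precS [0..<n]"
      using orderings fin_graph_label_graph by blast
    then show False using not_S by (simp add: is_search_ordering_iff[OF assms(1)])
  qed
next
  assume "\<forall>A\<in>PF. \<forall>B\<in>PF. precS A B \<longrightarrow> precS' A B"
  then show "\<forall>(V :: nat set) E \<sigma>. fin_graph V E \<longrightarrow>
            is_search_ordering V E precS' \<sigma> \<longrightarrow> is_search_ordering V E precS \<sigma>"
    using is_search_ordering_mono[OF assms] unfolding fin_graph_def by blast
qed

end
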